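(* Conjugation by $\nu$ induces an isomorphism of Lie algebras $\mathfrak{sder}_2\xrightarrow{\sim}\mathfrak{ider}_2$, given by $E_{a,b}\mapsto\nu\circ E_{a,b}\circ\nu=d_{\nu(b)}$.
   Context: $\mathfrak{lie}_2$ is the degree-completed free Lie algebra over $\mathbb{Q}$ on $x,y$; set $z=-x-y$. $\nu$ is the (involutive) automorphism with $\nu(x)=z$, $\nu(y)=y$. For $a,b\in\mathfrak{lie}_2$ with $a$ having no linear term in $x$ and $b$ no linear term in $y$, $E_{a,b}$ is the derivation with $E_{a,b}(x)=[x,a]$, $E_{a,b}(y)=[y,b]$. $\mathfrak{tder}_2$ is the Lie algebra (under commutator) of such $E_{a,b}$ for which $E_{a,b}(z)=[z,c]$ for some $c\in\mathfrak{lie}_2$; $\mathfrak{sder}_2\subset\mathfrak{tder}_2$ consists of those with $[x,a]+[y,b]=0$ (i.e. $E_{a,b}(z)=0$); $\mathfrak{ider}_2\subset\mathfrak{tder}_2$ consists of the Ihara derivations $d_b=E_{0,b}$, $d_b(x)=0$, $d_b(y)=[y,b]$. *)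

theory Defs
  imports Complex_Main "HOL-Library.FuncSet"
begin

text \<open>Model: the degree-completed free associative algebra Q<<x,y>> is represented by
  formal series, i.e. functions from words over the alphabet {X,Y} to rationals.\<close>

datatype gen = X | Y

type_synonym ser = "gen list \<Rightarrow> rat"

definition szero :: ser where "szero = (\<lambda>w. 0)"
definition sadd :: "ser \<Rightarrow> ser \<Rightarrow> ser" where "sadd f g = (\<lambda>w. f w + g w)"
definition ssub :: "ser \<Rightarrow> ser \<Rightarrow> ser" where "ssub f g = (\<lambda>w. f w - g w)"
definition ssmul :: "rat \<Rightarrow> ser \<Rightarrow> ser" where "ssmul c f = (\<lambda>w. c * f w)"

definition smul :: "ser \<Rightarrow> ser \<Rightarrow> ser" where
  "smul f g = (\<lambda>w. \<Sum>i\<le>length w. f (take i w) * g (drop i w))"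

definition br :: "ser \<Rightarrow> ser \<Rightarrow> ser" where "br f g = ssub (smul f g) (smul g f)"

definition gx :: ser where "gx = (\<lambda>w. if w = [X] then 1 else 0)"
definition gy :: ser where "gy = (\<lambda>w. if w = [Y] then 1 else 0)"
definition gz :: ser where "gz = (\<lambda>w. - gx w - gy w)"

definition hom :: "nat \<Rightarrow> ser \<Rightarrow> ser" where
  "hom n f = (\<lambda>w. if length w = n then f w else 0)"

text \<open>Lie polynomials in x, y (the free Lie algebra, inside the free associative algebra).\<close>
inductive_set liepoly :: "ser set" where
  gen_x: "gx \<in> liepoly"
| gen_y: "gy \<in> liepoly"
| add: "f \<in> liepoly \<Longrightarrow> g \<in> liepoly \<Longrightarrow> sadd f g \<in> liepoly"
| smul: "f \<in> liepoly \<Longrightarrow> ssmul c f \<in> liepoly"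
| bracket: "f \<in> liepoly \<Longrightarrow> g \<in> liepoly \<Longrightarrow> br f g \<in> liepoly"

definition lie2 :: "ser set" where "lie2 = {f. \<forall>n. hom n f \<in> liepoly}"

text \<open>The continuous derivation of Q<<x,y>> with x |-> u, y |-> v (u, v without
  constant term): on a word p c s it replaces the letter c by its image.\<close>
definition der :: "ser \<Rightarrow> ser \<Rightarrow> ser \<Rightarrow> ser" where
  "der u v f = (\<lambda>w. \<Sum>i\<le>length w. \<Sum>j\<in>{i<..length w}.
      f (take i w @ [X] @ drop j w) * u (drop i (take j w))
    + f (take i w @ [Y] @ drop j w) * v (drop i (take j w)))"

definition E :: "ser \<Rightarrow> ser \<Rightarrow> ser \<Rightarrow> ser" where "E a b = der (br gx a) (br gy b)"
definition dI :: "ser \<Rightarrow> ser \<Rightarrow> ser" where "dI b = E szero b"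

text \<open>The continuous automorphism nu: x |-> z = -x-y, y |-> y.  Coefficient of letter
  w_i in nu(v_i).\<close>
fun nucoef :: "gen \<Rightarrow> gen \<Rightarrow> rat" where
  "nucoef X _ = -1"
| "nucoef Y Y = 1"
| "nucoef Y X = 0"

definition nu :: "ser \<Rightarrow> ser" where
  "nu f = (\<lambda>w. \<Sum>v\<in>{v. length v = length w}.
              f v * (\<Prod>i<length w. nucoef (v ! i) (w ! i)))"

text \<open>Derivations of lie_2 are represented as functions restricted to lie2.\<close>
definition tcond :: "ser \<Rightarrow> ser \<Rightarrow> bool" where
  "tcond a b \<longleftrightarrow> a \<in> lie2 \<and> b \<in> lie2 \<and> a [X] = 0 \<and> b [Y] = 0
                 \<and> (\<exists>c\<in>lie2. E a b gz = br gz c)"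

definition tder2 :: "(ser \<Rightarrow> ser) set" where
  "tder2 = {restrict (E a b) lie2 | a b. tcond a b}"

definition sder2 :: "(ser \<Rightarrow> ser) set" where
  "sder2 = {restrict (E a b) lie2 | a b. tcond a b \<and> sadd (br gx a) (br gy b) = szero}"

definition ider2 :: "(ser \<Rightarrow> ser) set" where
  "ider2 = {restrict (E szero b) lie2 | b. tcond szero b}"

definition dcomm :: "(ser \<Rightarrow> ser) \<Rightarrow> (ser \<Rightarrow> ser) \<Rightarrow> ser \<Rightarrow> ser" where
  "dcomm D1 D2 = restrict (\<lambda>f. ssub (D1 (D2 f)) (D2 (D1 f))) lie2"
definition dadd :: "(ser \<Rightarrow> ser) \<Rightarrow> (ser \<Rightarrow> ser) \<Rightarrow> ser \<Rightarrow> ser" where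
  "dadd D1 D2 = restrict (\<lambda>f. sadd (D1 f) (D2 f)) lie2"
definition dsmul :: "rat \<Rightarrow> (ser \<Rightarrow> ser) \<Rightarrow> ser \<Rightarrow> ser" where
  "dsmul c D = restrict (\<lambda>f. ssmul c (D f)) lie2"

definition conjnu :: "(ser \<Rightarrow> ser) \<Rightarrow> ser \<Rightarrow> ser" where
  "conjnu D = restrict (\<lambda>f. nu (D (nu f))) lie2"

end

theory Submission
  imports Defs
begin

text \<open>The automorphism \<open>\<nu>\<close> is an involution of \<open>\<bbbQ>\<langle>\<langle>x,y\<rangle>\<rangle>\<close> preserving
  \<open>lie\<^sub>2\<close>, so conjugation by \<open>\<nu>\<close> is an involution on derivations of \<open>lie\<^sub>2\<close>
  compatible with sums, scalar multiples and commutators. A continuous derivation is determined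
  by its values on \<open>x\<close> and \<open>y\<close>: if \<open>E\<^sub>a\<^sub>,\<^sub>b\<close> kills \<open>z\<close>, then
  \<open>\<nu> E\<^sub>a\<^sub>,\<^sub>b \<nu>\<close> kills \<open>\<nu>(z) = x\<close> and sends \<open>y = \<nu>(y)\<close> to
  \<open>\<nu>[y,b] = [y,\<nu>(b)]\<close>, so it is \<open>d\<^bsub>\<nu>(b)\<^esub>\<close>. Conversely, if \<open>d\<^bsub>b'\<^esub>(z) = [z,c]\<close>
  then \<open>d\<^bsub>b'\<^esub>\<close> is the conjugate of \<open>E\<^sub>a\<^sub>,\<^sub>b\<close> with \<open>a = \<nu>(c)\<close>, \<open>b = \<nu>(b')\<close>
  (corrected by linear terms, which do not change the derivation), and \<open>E\<^sub>a\<^sub>,\<^sub>b(z) = 0\<close>.\<close>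

section \<open>Monomial expansions\<close>

lemma UNIV_gen: "(UNIV :: gen set) = {X, Y}"
  using gen.exhaust by auto

definition words_upto :: "nat \<Rightarrow> gen list set" where
  "words_upto n = {v. length v \<le> n}"

lemma mem_words_upto [simp]: "v \<in> words_upto n \<longleftrightarrow> length v \<le> n"
  by (simp add: words_upto_def)

lemma finite_words_upto [simp]: "finite (words_upto n)"
proof -
  have "finite (UNIV :: gen set)"
    by (simp add: UNIV_gen)
  from finite_lists_length_le[OF this, of n] show ?thesis
    by (simp add: words_upto_def)
qed

lemma finite_words_length_eq: "finite {v :: gen list. length v = n}"
  by (rule finite_subset[OF _ finite_words_upto[of n]]) auto

definition smon :: "gen list \<Rightarrow> ser" where
  "smon p = (\<lambda>w. if w = p then 1 else 0)"

lemma gx_eq_smon: "gx = smon [X]"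
  by (auto simp: gx_def smon_def)

lemma gy_eq_smon: "gy = smon [Y]"
  by (auto simp: gy_def smon_def)

text \<open>The continuous linear operators that do not lower the length of words.\<close>
definition monomial_expansion :: "(ser \<Rightarrow> ser) \<Rightarrow> bool" where
  "monomial_expansion L \<longleftrightarrow>
     (\<forall>f w. L f w = (\<Sum>v\<in>words_upto (length w). f v * L (smon v) w))"

lemma monomial_expansionD:
  "monomial_expansion L \<Longrightarrow> L f w = (\<Sum>v\<in>words_upto (length w). f v * L (smon v) w)"
  unfolding monomial_expansion_def by blast

lemma monomial_expansionI:
  fixes A :: "gen list \<Rightarrow> 'i set"
  assumes L: "\<And>f w. L f w = (\<Sum>x\<in>A w. f (h w x) * k w x)"
    and fin: "\<And>w. finite (A w)"
    and len: "\<And>w x. x \<in> A w \<Longrightarrow> length (h w x) \<le> length w"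
  shows "monomial_expansion L"
  unfolding monomial_expansion_def
proof (intro allI)
  fix f w
  have smon: "L (smon v) w = (\<Sum>x\<in>A w. if h w x = v then k w x else 0)" for v
    unfolding L smon_def by (rule sum.cong) auto
  have "(\<Sum>v\<in>words_upto (length w). f v * L (smon v) w)
      = (\<Sum>x\<in>A w. \<Sum>v\<in>words_upto (length w). if v = h w x then f (h w x) * k w x else 0)"
    unfolding smon sum_distrib_left by (subst sum.swap) (intro sum.cong; auto)
  also have "\<dots> = (\<Sum>x\<in>A w. f (h w x) * k w x)"
    using len by (intro sum.cong) (simp_all add: sum.delta)
  finally show "L f w = (\<Sum>v\<in>words_upto (length w). f v * L (smon v) w)"
    using L by simp
qed

lemma monomial_expansion_smon_longer:
  assumes "monomial_expansion L" "length w < length v"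
  shows "L (smon v) w = 0"
proof -
  have "L (smon v) w = (\<Sum>u\<in>words_upto (length w). smon v u * L (smon u) w)"
    by (rule monomial_expansionD[OF assms(1)])
  also have "\<dots> = 0"
    using assms(2) by (intro sum.neutral) (auto simp: smon_def)
  finally show ?thesis .
qed

lemma monomial_expansion_comp:
  assumes L1: "monomial_expansion L1" and L2: "monomial_expansion L2"
  shows "monomial_expansion (\<lambda>f. L1 (L2 f))"
  unfolding monomial_expansion_def
proof (intro allI)
  fix f :: ser and w :: "gen list"
  let ?W = "words_upto (length w)"
  have L2_upto: "L2 g v = (\<Sum>u\<in>?W. g u * L2 (smon u) v)" if "v \<in> ?W" for g v
  proof -
    have "L2 g v = (\<Sum>u\<in>words_upto (length v). g u * L2 (smon u) v)"
      by (rule monomial_expansionD[OF L2])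
    also have "\<dots> = (\<Sum>u\<in>?W. g u * L2 (smon u) v)"
      using that monomial_expansion_smon_longer[OF L2]
      by (intro sum.mono_neutral_left) auto
    finally show ?thesis .
  qed
  have L1_exp: "L1 g w = (\<Sum>v\<in>?W. g v * L1 (smon v) w)" for g
    by (rule monomial_expansionD[OF L1])
  have "L1 (L2 f) w = (\<Sum>v\<in>?W. L2 f v * L1 (smon v) w)"
    by (rule L1_exp)
  also have "\<dots> = (\<Sum>v\<in>?W. \<Sum>u\<in>?W. f u * L2 (smon u) v * L1 (smon v) w)"
    by (intro sum.cong refl) (simp add: L2_upto[where g=f] sum_distrib_right)
  also have "\<dots> = (\<Sum>u\<in>?W. f u * (\<Sum>v\<in>?W. L2 (smon u) v * L1 (smon v) w))"
    by (subst sum.swap) (simp add: sum_distrib_left mult.assoc)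
  also have "\<dots> = (\<Sum>u\<in>?W. f u * L1 (L2 (smon u)) w)"
    using L1_exp[where g="L2 (smon _)"] by simp
  finally show "L1 (L2 f) w = (\<Sum>u\<in>?W. f u * L1 (L2 (smon u)) w)" .
qed

lemma monomial_expansion_eqI:
  assumes "monomial_expansion L1" "monomial_expansion L2" "\<And>p. L1 (smon p) = L2 (smon p)"
  shows "L1 f = L2 f"
proof
  fix w
  have "L1 f w = (\<Sum>v\<in>words_upto (length w). f v * L1 (smon v) w)"
    by (rule monomial_expansionD[OF assms(1)])
  also have "\<dots> = (\<Sum>v\<in>words_upto (length w). f v * L2 (smon v) w)"
    using assms(3) by simp
  also have "\<dots> = L2 f w"
    by (rule monomial_expansionD[OF assms(2), symmetric])
  finally show "L1 f w = L2 f w" .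
qed

lemma monomial_expansion_sadd:
  assumes "monomial_expansion L1" "monomial_expansion L2"
  shows "monomial_expansion (\<lambda>f. sadd (L1 f) (L2 f))"
  unfolding monomial_expansion_def sadd_def
proof (intro allI)
  fix f w
  show "L1 f w + L2 f w = (\<Sum>v\<in>words_upto (length w). f v * (L1 (smon v) w + L2 (smon v) w))"
    using monomial_expansionD[OF assms(1), of f w] monomial_expansionD[OF assms(2), of f w]
    by (simp add: sum.distrib distrib_left)
qed

lemma monomial_expansion_id: "monomial_expansion (\<lambda>f. f)"
  by (rule monomial_expansionI[where A="\<lambda>w. {()}" and h="\<lambda>w x. w" and k="\<lambda>w x. 1"]) auto

lemma smul_smon_smon: "smul (smon p) (smon q) = smon (p @ q)"
proof
  fix w
  have "take i w = p \<and> drop i w = q \<longleftrightarrow> i = length p \<and> w = p @ q" if "i \<le> length w" for i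
    using that by (metis append_eq_conv_conj append_take_drop_id length_take min.absorb2)
  then have "smul (smon p) (smon q) w = (\<Sum>i\<le>length w. if i = length p \<and> w = p @ q then 1 else 0)"
    unfolding smul_def smon_def by (intro sum.cong) auto
  also have "\<dots> = smon (p @ q) w"
    by (cases "w = p @ q") (auto simp: smon_def)
  finally show "smul (smon p) (smon q) w = smon (p @ q) w" .
qed

lemma monomial_expansion_smul_left: "monomial_expansion (\<lambda>f. smul f g)"
  by (rule monomial_expansionI[where A="\<lambda>w. {..length w}" and h="\<lambda>w i. take i w"
        and k="\<lambda>w i. g (drop i w)"]) (auto simp: smul_def)

lemma monomial_expansion_smul_right: "monomial_expansion (\<lambda>f. smul g f)"
  by (rule monomial_expansionI[where A="\<lambda>w. {..length w}" and h="\<lambda>w i. drop i w"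
        and k="\<lambda>w i. g (take i w)"]) (auto simp: smul_def mult.commute)

lemma smul_assoc: "smul (smul f g) h = smul f (smul g h)"
proof -
  have "smul (smul (smon p) (smon q)) h = smul (smon p) (smul (smon q) h)" for p q
    by (rule monomial_expansion_eqI[OF monomial_expansion_smul_right
          monomial_expansion_comp[OF monomial_expansion_smul_right monomial_expansion_smul_right]])
      (simp add: smul_smon_smon)
  then have "smul (smul (smon p) g) h = smul (smon p) (smul g h)" for p
    by (rule monomial_expansion_eqI[OF
          monomial_expansion_comp[OF monomial_expansion_smul_left monomial_expansion_smul_right]
          monomial_expansion_comp[OF monomial_expansion_smul_right monomial_expansion_smul_left]])
  then show ?thesis
    by (rule monomial_expansion_eqI[OF
          monomial_expansion_comp[OF monomial_expansion_smul_left monomial_expansion_smul_left]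
          monomial_expansion_smul_left])
qed

lemma smul_one_left [simp]: "smul (smon []) f = f"
  by (rule ext) (simp add: smul_def smon_def sum.atMost_shift)

lemma smul_one_right [simp]: "smul f (smon []) = f"
proof
  fix w
  have "smul f (smon []) w = (\<Sum>i\<le>length w. if i = length w then f w else 0)"
    unfolding smul_def smon_def by (rule sum.cong) auto
  then show "smul f (smon []) w = f w" by simp
qed

lemma smul_sadd_left: "smul (sadd f g) h = sadd (smul f h) (smul g h)"
  by (auto simp: smul_def sadd_def sum.distrib distrib_right)

lemma smul_sadd_right: "smul h (sadd f g) = sadd (smul h f) (smul h g)"
  by (auto simp: smul_def sadd_def sum.distrib distrib_left)

lemma smul_ssmul_left: "smul (ssmul c f) h = ssmul c (smul f h)"
  by (auto simp: smul_def ssmul_def sum_distrib_left mult.assoc)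

lemma smul_ssmul_right: "smul h (ssmul c f) = ssmul c (smul h f)"
  by (auto simp: smul_def ssmul_def sum_distrib_left mult.left_commute)

lemma smul_szero_left [simp]: "smul szero h = szero"
  by (auto simp: smul_def szero_def)

lemma smul_szero_right [simp]: "smul h szero = szero"
  by (auto simp: smul_def szero_def)

lemma sadd_szero_left [simp]: "sadd szero f = f"
  by (auto simp: sadd_def szero_def)

lemma sadd_szero_right [simp]: "sadd f szero = f"
  by (auto simp: sadd_def szero_def)

lemma sadd_assoc: "sadd (sadd f g) h = sadd f (sadd g h)"
  by (auto simp: sadd_def)

lemma ssmul_szero [simp]: "ssmul c szero = szero"
  by (simp add: ssmul_def szero_def)

lemma smul_letter_supported:
  assumes "\<And>u. length u \<noteq> 1 \<Longrightarrow> s u = 0"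
  shows "smul s f (a # w) = s [a] * f w" and "smul s f [] = 0"
proof -
  have "smul s f (a # w) = s [] * f (a # w) + (\<Sum>i\<le>length w. s (a # take i w) * f (drop i w))"
    unfolding smul_def length_Cons sum.atMost_Suc_shift by simp
  also have "\<dots> = (\<Sum>i\<in>{0}. s (a # take i w) * f (drop i w))"
    using assms by (subst sum.mono_neutral_right[where S="{0}"]) auto
  also have "\<dots> = s [a] * f w"
    by simp
  finally show "smul s f (a # w) = s [a] * f w" .
  show "smul s f [] = 0"
    using assms[of "[]"] by (simp add: smul_def)
qed

lemma br_Nil: "br f g [] = 0"
  by (simp add: br_def ssub_def smul_def)

lemma br_sadd_right: "br f (sadd g h) = sadd (br f g) (br f h)"
  unfolding br_def smul_sadd_right smul_sadd_left by (auto simp: sadd_def ssub_def)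

lemma br_ssmul_right: "br f (ssmul t g) = ssmul t (br f g)"
  unfolding br_def smul_ssmul_right smul_ssmul_left by (auto simp: ssmul_def ssub_def algebra_simps)

lemma br_szero_right [simp]: "br f szero = szero"
  unfolding br_def smul_szero_left smul_szero_right by (simp add: ssub_def szero_def)

lemma br_self [simp]: "br f f = szero"
  by (auto simp: br_def ssub_def szero_def)

section \<open>The automorphism \<open>\<nu>\<close>\<close>

lemma nu_sadd: "nu (sadd f g) = sadd (nu f) (nu g)"
  by (auto simp: nu_def sadd_def sum.distrib distrib_right)

lemma nu_ssub: "nu (ssub f g) = ssub (nu f) (nu g)"
  by (auto simp: nu_def ssub_def sum_subtractf left_diff_distrib)

lemma nu_ssmul: "nu (ssmul c f) = ssmul c (nu f)"
  by (auto simp: nu_def ssmul_def sum_distrib_left mult.assoc)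

lemma nu_szero [simp]: "nu szero = szero"
  by (auto simp: nu_def szero_def)

lemma monomial_expansion_nu: "monomial_expansion nu"
  by (rule monomial_expansionI[where A="\<lambda>w. {v. length v = length w}" and h="\<lambda>w v. v"
        and k="\<lambda>w v. \<Prod>i<length w. nucoef (v ! i) (w ! i)"])
     (auto simp: nu_def finite_words_length_eq)

lemma nu_smon:
  "nu (smon p) w = (if length w = length p then \<Prod>i<length w. nucoef (p ! i) (w ! i) else 0)"
proof -
  have "nu (smon p) w = (\<Sum>v\<in>{v. length v = length w}.
      if v = p then \<Prod>i<length w. nucoef (p ! i) (w ! i) else 0)"
    unfolding nu_def smon_def by (rule sum.cong) auto
  then show ?thesis
    by (simp add: finite_words_length_eq eq_commute)
qed

lemma nu_smon_Cons: "nu (smon (c # p)) = smul (nu (smon [c])) (nu (smon p))"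
proof
  fix w
  have letters: "length u \<noteq> 1 \<Longrightarrow> nu (smon [c]) u = 0" for u
    by (simp add: nu_smon)
  show "nu (smon (c # p)) w = smul (nu (smon [c])) (nu (smon p)) w"
  proof (cases w)
    case Nil
    then show ?thesis
      using smul_letter_supported(2)[of "nu (smon [c])", OF letters] by (simp add: nu_smon)
  next
    case (Cons a w')
    have "smul (nu (smon [c])) (nu (smon p)) (a # w') = nu (smon [c]) [a] * nu (smon p) w'"
      by (rule smul_letter_supported(1)) (rule letters)
    then show ?thesis
      unfolding Cons nu_smon by (simp only: length_Cons prod.lessThan_Suc_shift) simp
  qed
qed

lemma nu_smon_Nil [simp]: "nu (smon []) = smon []"
proof
  fix w
  show "nu (smon []) w = smon [] w"
    unfolding nu_smon by (simp add: smon_def)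
qed

lemma nu_smon_append: "nu (smon (p @ q)) = smul (nu (smon p)) (nu (smon q))"
proof (induction p)
  case Nil
  then show ?case by simp
next
  case (Cons c p)
  have "nu (smon ((c # p) @ q)) = smul (nu (smon [c])) (nu (smon (p @ q)))"
    using nu_smon_Cons[of c "p @ q"] by simp
  also have "\<dots> = smul (nu (smon (c # p))) (nu (smon q))"
    unfolding Cons.IH nu_smon_Cons[of c p] smul_assoc ..
  finally show ?case .
qed

lemma nu_smul: "nu (smul f g) = smul (nu f) (nu g)"
proof -
  have "nu (smul (smon p) g) = smul (nu (smon p)) (nu g)" for p
    by (rule monomial_expansion_eqI[OF
          monomial_expansion_comp[OF monomial_expansion_nu monomial_expansion_smul_right]
          monomial_expansion_comp[OF monomial_expansion_smul_right monomial_expansion_nu]])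
      (simp add: smul_smon_smon nu_smon_append)
  then show ?thesis
    by (rule monomial_expansion_eqI[OF
          monomial_expansion_comp[OF monomial_expansion_nu monomial_expansion_smul_left]
          monomial_expansion_comp[OF monomial_expansion_smul_left monomial_expansion_nu]])
qed

lemma nu_br: "nu (br f g) = br (nu f) (nu g)"
  unfolding br_def nu_ssub nu_smul ..

lemma length_Suc_0_cases: "length w = Suc 0 \<Longrightarrow> w = [X] \<or> w = [Y]"
  by (cases w) (auto intro: gen.exhaust)

lemma nu_gx: "nu gx = gz"
proof
  fix w
  show "nu gx w = gz w"
    unfolding gx_eq_smon nu_smon using length_Suc_0_cases[of w]
    by (auto simp: gz_def gx_def gy_def)
qed

lemma nu_gy: "nu gy = gy"
proof
  fix w
  show "nu gy w = gy w"
    unfolding gy_eq_smon nu_smon using length_Suc_0_cases[of w]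
    by (auto simp: smon_def)
qed

lemma gz_eq: "gz = sadd (ssmul (-1) gx) (ssmul (-1) gy)"
  by (auto simp: gz_def sadd_def ssmul_def)

lemma nu_gz: "nu gz = gx"
  unfolding gz_eq nu_sadd nu_ssmul nu_gx nu_gy
  by (auto simp: gz_def sadd_def ssmul_def)

lemma nu_nu: "nu (nu f) = f"
proof -
  have "nu (nu (smon p)) = smon p" for p
  proof (induction p)
    case Nil
    show ?case by simp
  next
    case (Cons c p)
    have "nu (nu (smon [c])) = smon [c]"
      by (cases c) (simp_all flip: gx_eq_smon gy_eq_smon add: nu_gx nu_gz nu_gy)
    moreover have "smon (c # p) = smul (smon [c]) (smon p)"
      by (simp add: smul_smon_smon)
    ultimately show ?case
      using Cons.IH by (simp add: nu_smul)
  qed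
  then show ?thesis
    by (rule monomial_expansion_eqI[OF
          monomial_expansion_comp[OF monomial_expansion_nu monomial_expansion_nu]
          monomial_expansion_id])
qed

lemma nu_word_length_1: "nu f [d] = - f [X] + (if d = Y then f [Y] else 0)"
proof -
  have "{v :: gen list. length v = length [d]} = {[X], [Y]}"
    using length_Suc_0_cases by auto
  then show ?thesis
    unfolding nu_def by (cases d) auto
qed

section \<open>Continuous derivations\<close>

lemma monomial_expansion_sadd_arg:
  "monomial_expansion L \<Longrightarrow> L (sadd f g) = sadd (L f) (L g)"
  by (rule ext) (simp add: monomial_expansionD[of L] sadd_def sum.distrib distrib_right)

lemma monomial_expansion_ssub_arg:
  "monomial_expansion L \<Longrightarrow> L (ssub f g) = ssub (L f) (L g)"
  by (rule ext) (simp add: monomial_expansionD[of L] ssub_def sum_subtractf left_diff_distrib)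

lemma monomial_expansion_ssmul_arg:
  "monomial_expansion L \<Longrightarrow> L (ssmul c f) = ssmul c (L f)"
  by (rule ext) (simp add: monomial_expansionD[of L] ssmul_def sum_distrib_left mult.assoc)

definition der_index :: "gen list \<Rightarrow> (nat \<times> nat \<times> gen) set" where
  "der_index w = (SIGMA i:{..length w}. {i<..length w} \<times> UNIV)"

lemma mem_der_index [simp]: "(i, j, c) \<in> der_index w \<longleftrightarrow> i < j \<and> j \<le> length w"
  by (auto simp: der_index_def)

lemma finite_der_index [simp]: "finite (der_index w)"
  unfolding der_index_def by (intro finite_SigmaI) (auto simp: UNIV_gen)

text \<open>Index \<open>(i, j, c)\<close>: the factor of \<open>w\<close> between positions \<open>i\<close> and \<open>j\<close> comes from
  the letter \<open>c\<close> of the word \<open>take i w @ [c] @ drop j w\<close>.\<close>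
lemma der_eq_sum_index:
  "der u v f w = (\<Sum>(i, j, c)\<in>der_index w.
      f (take i w @ [c] @ drop j w) * case_gen u v c (drop i (take j w)))"
proof -
  define F where "F i j c = f (take i w @ [c] @ drop j w) * case_gen u v c (drop i (take j w))"
    for i j c
  have "der u v f w = (\<Sum>i\<le>length w. \<Sum>j\<in>{i<..length w}. \<Sum>c\<in>UNIV. F i j c)"
    by (simp add: der_def F_def UNIV_gen)
  also have "\<dots> = (\<Sum>i\<le>length w. \<Sum>(j, c)\<in>{i<..length w} \<times> UNIV. F i j c)"
    by (simp add: sum.cartesian_product)
  also have "\<dots> = (\<Sum>(i, j, c)\<in>der_index w. F i j c)"
    unfolding der_index_def by (subst sum.Sigma) (auto simp: UNIV_gen split_def)
  finally show ?thesis
    by (simp add: F_def)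
qed

lemma monomial_expansion_der: "monomial_expansion (der u v)"
  by (rule monomial_expansionI[where A=der_index
        and h="\<lambda>w (i, j, c). take i w @ [c] @ drop j w"
        and k="\<lambda>w (i, j, c). case_gen u v c (drop i (take j w))"])
     (auto simp: der_eq_sum_index case_prod_unfold)

lemma sum_greaterThanAtMost_Suc_shift:
  "(\<Sum>j\<in>{Suc i<..Suc n}. g j) = (\<Sum>j\<in>{i<..n}. g (Suc j))"
  by (simp only: atLeastSucAtMost_greaterThanAtMost[symmetric] sum.shift_bounds_cl_Suc_ivl)

lemma der_Cons:
  "der u v f (a # w) = (\<Sum>j\<in>{0<..Suc (length w)}.
        f (X # drop j (a # w)) * u (take j (a # w)) + f (Y # drop j (a # w)) * v (take j (a # w)))
     + der u v (\<lambda>x. f (a # x)) w"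
  unfolding der_def length_Cons sum.atMost_Suc_shift sum_greaterThanAtMost_Suc_shift
  by simp

lemma der_smon_Cons:
  assumes "u [] = 0" "v [] = 0"
  shows "der u v (smon (c # p))
    = sadd (smul (case_gen u v c) (smon p)) (smul (smon [c]) (der u v (smon p)))"
proof
  fix w
  have image_Nil: "case_gen u v c [] = 0"
    using assms by (cases c) simp_all
  have letter: "length x \<noteq> 1 \<Longrightarrow> smon [c] x = 0" for x
    by (auto simp: smon_def)
  show "der u v (smon (c # p)) w
    = sadd (smul (case_gen u v c) (smon p)) (smul (smon [c]) (der u v (smon p))) w"
  proof (cases w)
    case Nil
    then show ?thesis
      using image_Nil smul_letter_supported(2)[of "smon [c]", OF letter]
      by (simp add: sadd_def der_def smul_def)
  next
    case (Cons a w')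
    have "(\<Sum>j\<in>{0<..Suc (length w')}. smon (c # p) (X # drop j w) * u (take j w)
          + smon (c # p) (Y # drop j w) * v (take j w))
        = (\<Sum>j\<in>{0<..length w}. case_gen u v c (take j w) * smon p (drop j w))"
      using Cons by (intro sum.cong) (auto simp: smon_def split: gen.split)
    also have "\<dots> = smul (case_gen u v c) (smon p) w"
      unfolding smul_def using image_Nil by (simp add: atMost_atLeast0 sum.atLeast_Suc_atMost
          flip: atLeastSucAtMost_greaterThanAtMost)
    finally have first: "(\<Sum>j\<in>{0<..Suc (length w')}. smon (c # p) (X # drop j (a # w'))
          * u (take j (a # w')) + smon (c # p) (Y # drop j (a # w')) * v (take j (a # w')))
        = smul (case_gen u v c) (smon p) w"
      using Cons by simp
    have "(\<lambda>x. smon (c # p) (a # x)) = (if a = c then smon p else szero)"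
      by (auto simp: smon_def szero_def)
    then have rest: "der u v (\<lambda>x. smon (c # p) (a # x)) w' = smul (smon [c]) (der u v (smon p)) w"
      using Cons smul_letter_supported(1)[of "smon [c]", OF letter]
      by (auto simp: smon_def der_def szero_def)
    show ?thesis
      unfolding Cons der_Cons first rest using Cons by (simp add: sadd_def)
  qed
qed

lemma der_smon_Nil: "der u v (smon []) = szero"
  by (auto simp: der_def smon_def szero_def)

lemma der_smon_append:
  assumes "u [] = 0" "v [] = 0"
  shows "der u v (smon (p @ q))
    = sadd (smul (der u v (smon p)) (smon q)) (smul (smon p) (der u v (smon q)))"
proof (induction p)
  case Nil
  then show ?case by (simp add: der_smon_Nil)
next
  case (Cons c p)
  have "der u v (smon ((c # p) @ q)) = sadd (smul (case_gen u v c) (smon (p @ q)))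
      (smul (smon [c]) (der u v (smon (p @ q))))"
    using der_smon_Cons[of u v, OF assms, of c "p @ q"] by simp
  also have "\<dots> = sadd (smul (sadd (smul (case_gen u v c) (smon p)) (smul (smon [c]) (der u v (smon p))))
      (smon q)) (smul (smon [c]) (smul (smon p) (der u v (smon q))))"
    unfolding Cons.IH
    by (simp only: smul_sadd_left smul_sadd_right smul_assoc sadd_assoc smul_smon_smon)
  also have "\<dots> = sadd (smul (der u v (smon (c # p))) (smon q)) (smul (smon (c # p)) (der u v (smon q)))"
    unfolding der_smon_Cons[of u v, OF assms, of c p]
    by (simp add: smul_smon_smon flip: smul_assoc)
  finally show ?case .
qed

definition is_derivation :: "(ser \<Rightarrow> ser) \<Rightarrow> bool" where
  "is_derivation D \<longleftrightarrow> monomial_expansion D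
     \<and> (\<forall>f g. D (smul f g) = sadd (smul (D f) g) (smul f (D g)))"

lemma is_derivation_der:
  assumes "u [] = 0" "v [] = 0"
  shows "is_derivation (der u v)"
  unfolding is_derivation_def
proof (intro conjI allI monomial_expansion_der)
  fix f g
  have "der u v (smul (smon p) g) = sadd (smul (der u v (smon p)) g) (smul (smon p) (der u v g))" for p
    by (rule monomial_expansion_eqI[OF
          monomial_expansion_comp[OF monomial_expansion_der monomial_expansion_smul_right]
          monomial_expansion_sadd[OF monomial_expansion_smul_right
            monomial_expansion_comp[OF monomial_expansion_smul_right monomial_expansion_der]]])
      (simp add: smul_smon_smon der_smon_append[of u v, OF assms])
  then show "der u v (smul f g) = sadd (smul (der u v f) g) (smul f (der u v g))"
    by (rule monomial_expansion_eqI[OF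
          monomial_expansion_comp[OF monomial_expansion_der monomial_expansion_smul_left]
          monomial_expansion_sadd[OF
            monomial_expansion_comp[OF monomial_expansion_smul_left monomial_expansion_der]
            monomial_expansion_smul_left]])
qed

lemma der_gx: "u [] = 0 \<Longrightarrow> v [] = 0 \<Longrightarrow> der u v gx = u"
  using der_smon_Cons[of u v X "[]"] by (simp add: gx_eq_smon der_smon_Nil)

lemma der_gy: "u [] = 0 \<Longrightarrow> v [] = 0 \<Longrightarrow> der u v gy = v"
  using der_smon_Cons[of u v Y "[]"] by (simp add: gy_eq_smon der_smon_Nil)

lemma is_derivation_Leibniz:
  "is_derivation D \<Longrightarrow> D (smul f g) = sadd (smul (D f) g) (smul f (D g))"
  unfolding is_derivation_def by blast

lemma is_derivation_smon_Nil:
  assumes "is_derivation D"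
  shows "D (smon []) = szero"
proof
  fix w
  have "D (smon []) = sadd (D (smon [])) (D (smon []))"
    using is_derivation_Leibniz[OF assms, of "smon []" "smon []"] by simp
  then have "D (smon []) w = D (smon []) w + D (smon []) w"
    by (simp add: sadd_def fun_eq_iff)
  then show "D (smon []) w = szero w"
    by (simp add: szero_def)
qed

lemma is_derivation_br:
  assumes "is_derivation D"
  shows "D (br f g) = sadd (br (D f) g) (br f (D g))"
proof -
  have lin: "monomial_expansion D"
    using assms unfolding is_derivation_def by blast
  show ?thesis
    unfolding br_def monomial_expansion_ssub_arg[OF lin] is_derivation_Leibniz[OF assms]
    by (auto simp: ssub_def sadd_def)
qed

lemma is_derivation_eqI:
  assumes D1: "is_derivation D1" and D2: "is_derivation D2"
    and "D1 gx = D2 gx" "D1 gy = D2 gy"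
  shows "D1 = D2"
proof
  fix f
  have "D1 (smon p) = D2 (smon p)" for p
  proof (induction p)
    case Nil
    show ?case
      using D1 D2 by (simp add: is_derivation_smon_Nil)
  next
    case (Cons c p)
    have "D1 (smon [c]) = D2 (smon [c])"
      using assms(3,4) by (cases c) (simp_all flip: gx_eq_smon gy_eq_smon)
    moreover have "smon (c # p) = smul (smon [c]) (smon p)"
      by (simp add: smul_smon_smon)
    ultimately show ?case
      using Cons.IH by (simp add: is_derivation_Leibniz[OF D1] is_derivation_Leibniz[OF D2])
  qed
  then show "D1 f = D2 f"
    using D1 D2 unfolding is_derivation_def by (blast intro: monomial_expansion_eqI)
qed

lemma is_derivation_nu_conj:
  assumes D: "is_derivation D"
  shows "is_derivation (\<lambda>f. nu (D (nu f)))"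
  unfolding is_derivation_def
proof (intro conjI allI)
  have "monomial_expansion D"
    using D unfolding is_derivation_def by blast
  then show "monomial_expansion (\<lambda>f. nu (D (nu f)))"
    by (intro monomial_expansion_comp[OF monomial_expansion_nu]
        monomial_expansion_comp[OF _ monomial_expansion_nu])
  fix f g
  show "nu (D (nu (smul f g))) = sadd (smul (nu (D (nu f))) g) (smul f (nu (D (nu g))))"
    by (simp add: nu_smul is_derivation_Leibniz[OF D] nu_sadd nu_nu)
qed

lemma is_derivation_E: "is_derivation (E a b)"
  unfolding E_def by (rule is_derivation_der) (simp_all add: br_Nil)

lemma E_gx: "E a b gx = br gx a"
  unfolding E_def by (rule der_gx) (simp_all add: br_Nil)

lemma E_gy: "E a b gy = br gy b"
  unfolding E_def by (rule der_gy) (simp_all add: br_Nil)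

lemma E_gz: "E a b gz = ssmul (-1) (sadd (br gx a) (br gy b))"
proof -
  have lin: "monomial_expansion (E a b)"
    using is_derivation_E unfolding is_derivation_def by blast
  show ?thesis
    unfolding gz_eq monomial_expansion_sadd_arg[OF lin] monomial_expansion_ssmul_arg[OF lin] E_gx E_gy
    by (auto simp: sadd_def ssmul_def)
qed

lemma nu_conj_E_special:
  assumes "sadd (br gx a) (br gy b) = szero"
  shows "(\<lambda>f. nu (E a b (nu f))) = dI (nu b)"
proof (rule is_derivation_eqI[OF is_derivation_nu_conj[OF is_derivation_E]])
  show "is_derivation (dI (nu b))"
    unfolding dI_def by (rule is_derivation_E)
  show "nu (E a b (nu gx)) = dI (nu b) gx"
    using assms by (simp add: nu_gx E_gz E_gx dI_def)
  show "nu (E a b (nu gy)) = dI (nu b) gy"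
    by (simp add: nu_gy E_gy dI_def nu_br)
qed

section \<open>Lie series\<close>

lemma szero_liepoly: "szero \<in> liepoly"
proof -
  have "ssmul 0 gx = szero"
    by (auto simp: ssmul_def szero_def)
  then show ?thesis
    using liepoly.smul[OF liepoly.gen_x, of 0] by simp
qed

lemma sum_liepoly:
  assumes "finite K" "\<And>k. k \<in> K \<Longrightarrow> F k \<in> liepoly"
  shows "(\<lambda>w. \<Sum>k\<in>K. F k w) \<in> liepoly"
  using assms
proof (induction K rule: finite_induct)
  case empty
  then show ?case
    using szero_liepoly by (simp add: szero_def)
next
  case (insert k K)
  then have "(\<lambda>w. \<Sum>k\<in>insert k K. F k w) = sadd (F k) (\<lambda>w. \<Sum>k\<in>K. F k w)"
    by (auto simp: sadd_def)
  then show ?case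
    using liepoly.add insert by simp
qed

lemma liepoly_Nil: "f \<in> liepoly \<Longrightarrow> f [] = 0"
  by (induction rule: liepoly.induct) (auto simp: gx_def gy_def sadd_def ssmul_def br_Nil)

lemma is_derivation_liepoly:
  assumes D: "is_derivation D" and gx: "D gx \<in> liepoly" and gy: "D gy \<in> liepoly"
    and f: "f \<in> liepoly"
  shows "D f \<in> liepoly"
proof -
  have lin: "monomial_expansion D"
    using D unfolding is_derivation_def by blast
  from f show ?thesis
  proof (induction rule: liepoly.induct)
    case (add f g)
    then show ?case by (simp add: monomial_expansion_sadd_arg[OF lin] liepoly.add)
  next
    case (smul f c)
    then show ?case by (simp add: monomial_expansion_ssmul_arg[OF lin] liepoly.smul)
  next
    case (bracket f g)
    then show ?case by (simp add: is_derivation_br[OF D] liepoly.add liepoly.bracket)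
  qed (use gx gy in simp_all)
qed

lemma der_liepoly:
  assumes "u \<in> liepoly" "v \<in> liepoly" "f \<in> liepoly"
  shows "der u v f \<in> liepoly"
proof -
  have nil: "u [] = 0" "v [] = 0"
    using assms by (simp_all add: liepoly_Nil)
  show ?thesis
    by (rule is_derivation_liepoly[OF is_derivation_der[of u v, OF nil]])
      (simp_all add: der_gx[of u v, OF nil] der_gy[of u v, OF nil] assms)
qed

lemma nu_liepoly: "f \<in> liepoly \<Longrightarrow> nu f \<in> liepoly"
proof (induction rule: liepoly.induct)
  case gen_x
  then show ?case
    unfolding nu_gx gz_eq by (intro liepoly.add liepoly.smul liepoly.gen_x liepoly.gen_y)
next
  case gen_y
  then show ?case by (simp add: nu_gy liepoly.gen_y)
next
  case (add f g)
  then show ?case by (simp add: nu_sadd liepoly.add)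
next
  case (smul f c)
  then show ?case by (simp add: nu_ssmul liepoly.smul)
next
  case (bracket f g)
  then show ?case by (simp add: nu_br liepoly.bracket)
qed

section \<open>Homogeneous components\<close>

lemma mem_lie2: "f \<in> lie2 \<longleftrightarrow> (\<forall>n. hom n f \<in> liepoly)"
  by (simp add: lie2_def)

lemma hom_sadd: "hom n (sadd f g) = sadd (hom n f) (hom n g)"
  by (auto simp: hom_def sadd_def)

lemma hom_ssub: "hom n (ssub f g) = ssub (hom n f) (hom n g)"
  by (auto simp: hom_def ssub_def)

lemma hom_ssmul: "hom n (ssmul c f) = ssmul c (hom n f)"
  by (auto simp: hom_def ssmul_def)

lemma hom_szero: "hom n szero = szero"
  by (auto simp: hom_def szero_def)

lemma hom_nu: "hom n (nu f) = nu (hom n f)"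
proof
  fix w
  show "hom n (nu f) w = nu (hom n f) w"
    by (cases "length w = n") (auto simp: hom_def nu_def intro!: sum.neutral)
qed

lemma hom_smul: "hom n (smul f g) = (\<lambda>w. \<Sum>k\<le>n. smul (hom k f) (hom (n - k) g) w)"
proof
  fix w
  have "(\<Sum>k\<le>n. hom k f (take i w) * hom (n - k) g (drop i w))
      = (if length w = n then f (take i w) * g (drop i w) else 0)" if "i \<le> length w" for i
  proof -
    have "(\<Sum>k\<le>n. hom k f (take i w) * hom (n - k) g (drop i w))
        = (\<Sum>k\<le>n. if k = i then (if length w = n then f (take i w) * g (drop i w) else 0) else 0)"
      using that by (intro sum.cong) (auto simp: hom_def)
    then show ?thesis
      using that by auto
  qed
  then show "hom n (smul f g) w = (\<Sum>k\<le>n. smul (hom k f) (hom (n - k) g) w)"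
    unfolding smul_def by (subst sum.swap) (simp add: hom_def)
qed

lemma hom_br: "hom n (br f g) = (\<lambda>w. \<Sum>k\<le>n. br (hom k f) (hom (n - k) g) w)"
proof
  fix w
  have "(\<Sum>k\<le>n. smul (hom k g) (hom (n - k) f) w) = (\<Sum>k\<le>n. smul (hom (n - k) g) (hom k f) w)"
    by (rule sum.reindex_bij_witness[where i="\<lambda>k. n - k" and j="\<lambda>k. n - k"]) auto
  then show "hom n (br f g) w = (\<Sum>k\<le>n. br (hom k f) (hom (n - k) g) w)"
    unfolding br_def hom_ssub by (simp add: ssub_def hom_smul sum_subtractf)
qed

lemma case_gen_hom: "case_gen (hom k u) (hom k v) c = hom k (case_gen u v c)"
  by (cases c) simp_all

lemma sum_hom_products:
  assumes "1 \<le> length h" "1 \<le> length s"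
  shows "(\<Sum>m\<in>{1..n}. hom m f h * hom (n + 1 - m) g s)
    = (if length h + length s = n + 1 then f h * g s else 0)"
proof -
  have "(\<Sum>m\<in>{1..n}. hom m f h * hom (n + 1 - m) g s)
      = (\<Sum>m\<in>{1..n}. if m = length h then
          (if length h + length s = n + 1 then f h * g s else 0) else 0)"
    using assms by (intro sum.cong) (auto simp: hom_def)
  then show ?thesis
    using assms by auto
qed

lemma hom_der:
  "hom n (der u v f)
    = (\<lambda>w. \<Sum>m\<in>{1..n}. der (hom (n + 1 - m) u) (hom (n + 1 - m) v) (hom m f) w)"
proof
  fix w
  have "(\<Sum>m\<in>{1..n}. der (hom (n + 1 - m) u) (hom (n + 1 - m) v) (hom m f) w)
      = (\<Sum>(i, j, c)\<in>der_index w. \<Sum>m\<in>{1..n}. hom m f (take i w @ [c] @ drop j w)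
           * hom (n + 1 - m) (case_gen u v c) (drop i (take j w)))"
    unfolding der_eq_sum_index case_gen_hom by (subst sum.swap) (simp add: case_prod_unfold)
  also have "\<dots> = (\<Sum>(i, j, c)\<in>der_index w.
      if length w = n then f (take i w @ [c] @ drop j w) * case_gen u v c (drop i (take j w)) else 0)"
  proof (intro sum.cong refl, clarify)
    fix i j c
    assume "(i, j, c) \<in> der_index w"
    then show "(\<Sum>m\<in>{1..n}. hom m f (take i w @ [c] @ drop j w)
           * hom (n + 1 - m) (case_gen u v c) (drop i (take j w)))
        = (if length w = n then f (take i w @ [c] @ drop j w)
           * case_gen u v c (drop i (take j w)) else 0)"
      by (subst sum_hom_products) auto
  qed
  also have "\<dots> = hom n (der u v f) w"
    by (cases "length w = n") (simp_all add: hom_def der_eq_sum_index)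
  finally show "hom n (der u v f) w
      = (\<Sum>m\<in>{1..n}. der (hom (n + 1 - m) u) (hom (n + 1 - m) v) (hom m f) w)" ..
qed

lemma sadd_lie2: "f \<in> lie2 \<Longrightarrow> g \<in> lie2 \<Longrightarrow> sadd f g \<in> lie2"
  by (simp add: mem_lie2 hom_sadd liepoly.add)

lemma ssmul_lie2: "f \<in> lie2 \<Longrightarrow> ssmul c f \<in> lie2"
  by (simp add: mem_lie2 hom_ssmul liepoly.smul)

lemma szero_lie2: "szero \<in> lie2"
  by (simp add: mem_lie2 hom_szero szero_liepoly)

lemma gx_lie2: "gx \<in> lie2"
proof -
  have "hom n gx = (if n = 1 then gx else szero)" for n
    by (auto simp: hom_def gx_def szero_def)
  then show ?thesis
    by (simp add: mem_lie2 liepoly.gen_x szero_liepoly)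
qed

lemma gy_lie2: "gy \<in> lie2"
proof -
  have "hom n gy = (if n = 1 then gy else szero)" for n
    by (auto simp: hom_def gy_def szero_def)
  then show ?thesis
    by (simp add: mem_lie2 liepoly.gen_y szero_liepoly)
qed

lemma nu_lie2: "f \<in> lie2 \<Longrightarrow> nu f \<in> lie2"
  by (simp add: mem_lie2 hom_nu nu_liepoly)

lemma br_lie2: "f \<in> lie2 \<Longrightarrow> g \<in> lie2 \<Longrightarrow> br f g \<in> lie2"
  unfolding mem_lie2 hom_br by (auto intro!: sum_liepoly liepoly.bracket)

lemma der_lie2: "u \<in> lie2 \<Longrightarrow> v \<in> lie2 \<Longrightarrow> f \<in> lie2 \<Longrightarrow> der u v f \<in> lie2"
  unfolding mem_lie2 hom_der by (auto intro!: sum_liepoly der_liepoly)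

lemma E_lie2: "a \<in> lie2 \<Longrightarrow> b \<in> lie2 \<Longrightarrow> f \<in> lie2 \<Longrightarrow> E a b f \<in> lie2"
  unfolding E_def by (intro der_lie2 br_lie2 gx_lie2 gy_lie2)

section \<open>Conjugation by \<open>\<nu>\<close>\<close>

lemma conjnu_restrict: "conjnu (restrict D lie2) = restrict (\<lambda>f. nu (D (nu f))) lie2"
  by (rule ext) (simp add: conjnu_def nu_lie2)

lemma conjnu_conjnu: "D \<in> extensional lie2 \<Longrightarrow> conjnu (conjnu D) = D"
  by (rule ext) (auto simp: conjnu_def nu_lie2 nu_nu extensional_def)

lemma conjnu_dadd: "conjnu (dadd D1 D2) = dadd (conjnu D1) (conjnu D2)"
  by (rule ext) (simp add: conjnu_def dadd_def nu_sadd nu_lie2)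

lemma conjnu_dsmul: "conjnu (dsmul c D) = dsmul c (conjnu D)"
  by (rule ext) (simp add: conjnu_def dsmul_def nu_ssmul nu_lie2)

lemma conjnu_dcomm:
  assumes "D1 \<in> lie2 \<rightarrow> lie2" "D2 \<in> lie2 \<rightarrow> lie2"
  shows "conjnu (dcomm D1 D2) = dcomm (conjnu D1) (conjnu D2)"
proof
  fix f
  show "conjnu (dcomm D1 D2) f = dcomm (conjnu D1) (conjnu D2) f"
  proof (cases "f \<in> lie2")
    case True
    then have "D1 (nu f) \<in> lie2" "D2 (nu f) \<in> lie2"
      using assms nu_lie2 by blast+
    with True show ?thesis
      by (simp add: conjnu_def dcomm_def nu_lie2 nu_nu nu_ssub)
  qed (simp add: conjnu_def dcomm_def)
qed

lemma conjnu_E_special: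
  assumes "sadd (br gx a) (br gy b) = szero"
  shows "conjnu (restrict (E a b) lie2) = restrict (dI (nu b)) lie2"
  unfolding conjnu_restrict nu_conj_E_special[OF assms] ..

lemma dI_sadd_gy: "dI (sadd b (ssmul t gy)) = dI b"
  unfolding dI_def E_def br_sadd_right br_ssmul_right br_self by simp

lemma conjnu_sder2_subset: "conjnu ` sder2 \<subseteq> ider2"
proof clarify
  fix D
  assume "D \<in> sder2"
  then obtain a b where D: "D = restrict (E a b) lie2" and t: "tcond a b"
    and s: "sadd (br gx a) (br gy b) = szero"
    unfolding sder2_def by blast
  \<comment> \<open>dropping the linear term of \<open>\<nu>(b)\<close> in \<open>y\<close> leaves \<open>d\<^bsub>\<nu>(b)\<^esub>\<close> unchanged and achieves \<open>b' [Y] = 0\<close>\<close>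
  define b' where "b' = sadd (nu b) (ssmul (- nu b [Y]) gy)"
  have E_b': "E szero b' = dI (nu b)"
    using dI_sadd_gy[of "nu b" "- nu b [Y]"] by (simp add: b'_def dI_def)
  have conj: "conjnu D = restrict (E szero b') lie2"
    unfolding D conjnu_E_special[OF s] E_b' ..
  have "E szero b' gz = nu (E a b (nu gz))"
    unfolding E_b' nu_conj_E_special[OF s, symmetric] ..
  then have "E szero b' gz = br gz (nu a)"
    by (simp add: nu_gz E_gx nu_br nu_gx)
  moreover have "b' \<in> lie2" "nu a \<in> lie2"
    using t unfolding b'_def tcond_def by (auto intro: sadd_lie2 nu_lie2 ssmul_lie2 gy_lie2)
  ultimately have "tcond szero b'"
    unfolding tcond_def using szero_lie2
    by (auto simp: b'_def sadd_def ssmul_def gy_def szero_def)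
  then show "conjnu D \<in> ider2"
    unfolding conj ider2_def by blast
qed

lemma conjnu_ider2_subset: "conjnu ` ider2 \<subseteq> sder2"
proof clarify
  fix D
  assume "D \<in> ider2"
  then obtain b' c where D: "D = restrict (E szero b') lie2" and b': "b' \<in> lie2" "b' [Y] = 0"
    and c: "c \<in> lie2" "E szero b' gz = br gz c"
    unfolding ider2_def tcond_def by blast
  \<comment> \<open>the linear corrections achieve \<open>a [X] = 0\<close> and \<open>b [Y] = 0\<close> without changing \<open>[x,a]\<close>, \<open>[y,b]\<close>\<close>
  define a where "a = sadd (nu c) (ssmul (c [X]) gx)"
  define b where "b = sadd (nu b') (ssmul (b' [X]) gy)"
  have "ssmul (-1) (br gy b') = br gz c"
    using c(2) by (simp add: E_gz)
  then have "ssmul (-1) (br gy (nu b')) = br gx (nu c)"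
    using arg_cong[of _ _ nu] by (metis nu_br nu_gy nu_gz nu_ssmul)
  then have "br gx (nu c) w = - br gy (nu b') w" for w
    by (auto simp: ssmul_def fun_eq_iff)
  then have s: "sadd (br gx a) (br gy b) = szero"
    unfolding a_def b_def br_sadd_right br_ssmul_right br_self
    by (simp add: sadd_def ssmul_def szero_def)
  have "a \<in> lie2" "b \<in> lie2"
    unfolding a_def b_def using b' c by (auto intro!: sadd_lie2 nu_lie2 ssmul_lie2 gx_lie2 gy_lie2)
  moreover have "a [X] = 0" "b [Y] = 0"
    using b' by (simp_all add: a_def b_def sadd_def ssmul_def gx_def gy_def nu_word_length_1)
  moreover have "E a b gz = br gz szero"
    using s by (simp add: E_gz)
  ultimately have "tcond a b"
    unfolding tcond_def using szero_lie2 by blast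
  with s have sder: "restrict (E a b) lie2 \<in> sder2"
    unfolding sder2_def by blast
  have "nu b = sadd b' (ssmul (b' [X]) gy)"
    by (simp add: b_def nu_sadd nu_ssmul nu_nu nu_gy)
  then have "D = conjnu (restrict (E a b) lie2)"
    unfolding D conjnu_E_special[OF s] using dI_sadd_gy[of b' "b' [X]"] by (simp add: dI_def)
  then show "conjnu D \<in> sder2"
    using sder by (simp add: conjnu_conjnu)
qed

theorem lemma25:
  shows "bij_betw conjnu sder2 ider2
    \<and> (\<forall>D1\<in>sder2. \<forall>D2\<in>sder2. conjnu (dadd D1 D2) = dadd (conjnu D1) (conjnu D2))
    \<and> (\<forall>c. \<forall>D\<in>sder2. conjnu (dsmul c D) = dsmul c (conjnu D))
    \<and> (\<forall>D1\<in>sder2. \<forall>D2\<in>sder2. conjnu (dcomm D1 D2) = dcomm (conjnu D1) (conjnu D2))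
    \<and> (\<forall>a b. tcond a b \<and> sadd (br gx a) (br gy b) = szero \<longrightarrow>
          conjnu (restrict (E a b) lie2) = restrict (dI (nu b)) lie2)"
proof -
  have sder2_funcset: "D \<in> lie2 \<rightarrow> lie2" if "D \<in> sder2" for D
    using that by (auto simp: sder2_def tcond_def E_lie2)
  have "bij_betw conjnu sder2 ider2"
    by (rule bij_betw_byWitness[OF _ _ conjnu_sder2_subset conjnu_ider2_subset])
      (auto simp: sder2_def ider2_def conjnu_conjnu)
  then show ?thesis
    using conjnu_dadd conjnu_dsmul conjnu_dcomm[OF sder2_funcset sder2_funcset] conjnu_E_special
    by blast
qed

end
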